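(* Let $(M,g)$ be a space-time of dimension $n>3$ with smooth vector fields $u,w$ satisfying $u^ku_k=w^kw_k=-1$, $\nabla_iu_j=\varphi(u_iu_j+g_{ij})$ and $\nabla_iw_j=\lambda(w_iw_j+g_{ij})$ for scalar fields $\varphi,\lambda$. Suppose $\nabla_k\varphi=-u_k\,u^m\nabla_m\varphi+v\,b_k$ with $v\neq0$, $b^kb_k=1$, $u^kb_k=0$, and that $w_i=u_i\cosh\alpha+b_i\sinh\alpha$ with $\alpha\neq0$. Then $$\tanh\alpha=-\frac{2R_{ij}u^ib^j}{R_{ij}(u^iu^j+b^ib^j)}.$$
   Context: A space-time is a Lorentzian manifold with metric of signature $(-,+,\dots,+)$; $\nabla$ is its Levi-Civita connection. The Riemann tensor is defined by $[\nabla_i,\nabla_j]X_k=R_{ijkm}X^m$ and the Ricci tensor by $R_{jm}=g^{ik}R_{ijkm}$. *)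

theory Defs
  imports "HOL-Analysis.Analysis"
begin

text \<open>Local-coordinate rendering of Lorentzian geometry on an open set U of R^n.
  Points are x :: real^'n; tensor fields are given by their components
  (index type 'n). Covector fields (lower indices) X :: real^'n => 'n => real.\<close>

definition pd :: "'n::finite \<Rightarrow> (real^'n \<Rightarrow> real) \<Rightarrow> real^'n \<Rightarrow> real" where
  "pd i f x = frechet_derivative f (at x) (axis i 1)"

primrec iter_pd :: "'n::finite list \<Rightarrow> (real^'n \<Rightarrow> real) \<Rightarrow> real^'n \<Rightarrow> real" where
  "iter_pd [] f = f"
| "iter_pd (i # is) f = pd i (iter_pd is f)"

definition Cinf_on :: "(real^'n::finite) set \<Rightarrow> (real^'n \<Rightarrow> real) \<Rightarrow> bool" where
  "Cinf_on U f \<longleftrightarrow> (\<forall>is. iter_pd is f differentiable_on U)"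

definition metric_matrix :: "(real^'n::finite \<Rightarrow> 'n \<Rightarrow> 'n \<Rightarrow> real) \<Rightarrow> real^'n \<Rightarrow> real^'n^'n" where
  "metric_matrix g x = (\<chi> i j. g x i j)"

definition ginv :: "(real^'n::finite \<Rightarrow> 'n \<Rightarrow> 'n \<Rightarrow> real) \<Rightarrow> real^'n \<Rightarrow> 'n \<Rightarrow> 'n \<Rightarrow> real" where
  "ginv g x i j = matrix_inv (metric_matrix g x) $ i $ j"

definition lorentzian_at :: "(real^'n::finite \<Rightarrow> 'n \<Rightarrow> 'n \<Rightarrow> real) \<Rightarrow> real^'n \<Rightarrow> bool" where
  "lorentzian_at g x \<longleftrightarrow> (\<forall>i j. g x i j = g x j i) \<and>
     (\<exists>P::real^'n^'n. \<exists>i0. invertible P \<and>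
        transpose P ** metric_matrix g x ** P
          = (\<chi> i j. if i = j then (if i = i0 then -1 else 1) else 0))"

definition spacetime :: "(real^'n::finite) set \<Rightarrow> (real^'n \<Rightarrow> 'n \<Rightarrow> 'n \<Rightarrow> real) \<Rightarrow> bool" where
  "spacetime U g \<longleftrightarrow> open U \<and> (\<forall>i j. Cinf_on U (\<lambda>x. g x i j)) \<and> (\<forall>x\<in>U. lorentzian_at g x)"

definition christoffel :: "(real^'n::finite \<Rightarrow> 'n \<Rightarrow> 'n \<Rightarrow> real) \<Rightarrow> 'n \<Rightarrow> 'n \<Rightarrow> 'n \<Rightarrow> real^'n \<Rightarrow> real" where
  "christoffel g k i j x = (1/2) * (\<Sum>l\<in>UNIV. ginv g x k l *
      (pd i (\<lambda>y. g y j l) x + pd j (\<lambda>y. g y i l) x - pd l (\<lambda>y. g y i j) x))"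

definition cov1 :: "(real^'n::finite \<Rightarrow> 'n \<Rightarrow> 'n \<Rightarrow> real) \<Rightarrow> (real^'n \<Rightarrow> 'n \<Rightarrow> real) \<Rightarrow> 'n \<Rightarrow> 'n \<Rightarrow> real^'n \<Rightarrow> real" where
  "cov1 g X i j x = pd i (\<lambda>y. X y j) x - (\<Sum>k\<in>UNIV. christoffel g k i j x * X x k)"

definition cov2 :: "(real^'n::finite \<Rightarrow> 'n \<Rightarrow> 'n \<Rightarrow> real) \<Rightarrow> (real^'n \<Rightarrow> 'n \<Rightarrow> real) \<Rightarrow> 'n \<Rightarrow> 'n \<Rightarrow> 'n \<Rightarrow> real^'n \<Rightarrow> real" where
  "cov2 g X i j k x = pd i (\<lambda>y. cov1 g X j k y) x
      - (\<Sum>p\<in>UNIV. christoffel g p i j x * cov1 g X p k x)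
      - (\<Sum>p\<in>UNIV. christoffel g p i k x * cov1 g X j p x)"

text \<open>R_ijk^m defined by [nabla_i, nabla_j] X_k = R_ijk^m X_m, evaluated on the
  coordinate covector fields X_l = delta_lm.\<close>
definition riem_mixed :: "(real^'n::finite \<Rightarrow> 'n \<Rightarrow> 'n \<Rightarrow> real) \<Rightarrow> 'n \<Rightarrow> 'n \<Rightarrow> 'n \<Rightarrow> 'n \<Rightarrow> real^'n \<Rightarrow> real" where
  "riem_mixed g i j k m x =
     cov2 g (\<lambda>y l. if l = m then 1 else 0) i j k x - cov2 g (\<lambda>y l. if l = m then 1 else 0) j i k x"

text \<open>R_ijkm = R_ijk^p g_pm, so that [nabla_i, nabla_j] X_k = R_ijkm X^m.\<close>
definition riem :: "(real^'n::finite \<Rightarrow> 'n \<Rightarrow> 'n \<Rightarrow> real) \<Rightarrow> 'n \<Rightarrow> 'n \<Rightarrow> 'n \<Rightarrow> 'n \<Rightarrow> real^'n \<Rightarrow> real" where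
  "riem g i j k m x = (\<Sum>p\<in>UNIV. g x p m * riem_mixed g i j k p x)"

definition ricci :: "(real^'n::finite \<Rightarrow> 'n \<Rightarrow> 'n \<Rightarrow> real) \<Rightarrow> 'n \<Rightarrow> 'n \<Rightarrow> real^'n \<Rightarrow> real" where
  "ricci g j m x = (\<Sum>i\<in>UNIV. \<Sum>k\<in>UNIV. ginv g x i k * riem g i j k m x)"

definition raise :: "(real^'n::finite \<Rightarrow> 'n \<Rightarrow> 'n \<Rightarrow> real) \<Rightarrow> (real^'n \<Rightarrow> 'n \<Rightarrow> real) \<Rightarrow> real^'n \<Rightarrow> 'n \<Rightarrow> real" where
  "raise g X x i = (\<Sum>k\<in>UNIV. ginv g x i k * X x k)"

definition gdot :: "(real^'n::finite \<Rightarrow> 'n \<Rightarrow> 'n \<Rightarrow> real) \<Rightarrow> real^'n \<Rightarrow> ('n \<Rightarrow> real) \<Rightarrow> ('n \<Rightarrow> real) \<Rightarrow> real" where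
  "gdot g x X Y = (\<Sum>i\<in>UNIV. \<Sum>k\<in>UNIV. ginv g x i k * X i * Y k)"

end

theory Submission
  imports Defs
begin

text \<open>
  For a unit time-like field with \<open>\<nabla>\<^sub>i u\<^sub>j = \<phi> (u\<^sub>i u\<^sub>j + g\<^sub>i\<^sub>j)\<close> the Ricci identity gives
  \<open>R\<^sub>i\<^sub>j\<^sub>k\<^sub>m u\<^sup>m = \<nabla>\<^sub>i\<phi> (u\<^sub>j u\<^sub>k + g\<^sub>j\<^sub>k) - \<nabla>\<^sub>j\<phi> (u\<^sub>i u\<^sub>k + g\<^sub>i\<^sub>k) + \<phi>\<^sup>2 (u\<^sub>j g\<^sub>i\<^sub>k - u\<^sub>i g\<^sub>j\<^sub>k)\<close>.
  Contracting, \<open>R\<^sub>i\<^sub>j u\<^sup>i u\<^sup>j = -(n - 1)(u\<^sup>m\<nabla>\<^sub>m\<phi> + \<phi>\<^sup>2)\<close>, and every plane containing \<open>u\<close> has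
  sectional curvature \<open>u\<^sup>m\<nabla>\<^sub>m\<phi> + \<phi>\<^sup>2\<close>. The field \<open>w = u cosh \<alpha> + b sinh \<alpha>\<close> lies in
  the plane of \<open>u\<close> and \<open>b\<close>, so computing the curvature of that plane from \<open>w\<close> instead
  gives \<open>w\<^sup>m\<nabla>\<^sub>m\<lambda> + \<lambda>\<^sup>2 = u\<^sup>m\<nabla>\<^sub>m\<phi> + \<phi>\<^sup>2\<close>, hence \<open>R\<^sub>i\<^sub>j w\<^sup>i w\<^sup>j = R\<^sub>i\<^sub>j u\<^sup>i u\<^sup>j\<close>.
  Expanding the left side in \<open>u\<close> and \<open>b\<close> yields
  \<open>sinh \<alpha> (R\<^sub>u\<^sub>u + R\<^sub>b\<^sub>b) = -2 cosh \<alpha> R\<^sub>u\<^sub>b\<close>, and \<open>R\<^sub>u\<^sub>b = -(n - 2) v \<noteq> 0\<close> keeps the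
  denominator away from zero.
\<close>

lemma pd_has_derivative: "(f has_derivative f') (at x) \<Longrightarrow> pd i f x = f' (axis i 1)"
  unfolding pd_def by (metis frechet_derivative_at)

lemma pd_cong_open:
  assumes "open U" "x \<in> U" "\<And>y. y \<in> U \<Longrightarrow> f y = h y"
  shows "pd i f x = pd i h x"
proof -
  have "(f has_derivative D) (at x) \<longleftrightarrow> (h has_derivative D) (at x)" for D
    using has_derivative_transform_within_open[OF _ assms(1,2)] assms(3) by metis
  then show ?thesis unfolding pd_def frechet_derivative_def by simp
qed

lemma pd_const [simp]: "pd i (\<lambda>y. c) x = 0"
  by (simp add: pd_def)

lemma pd_add:
  assumes "f differentiable (at x)" "h differentiable (at x)"
  shows "pd i (\<lambda>y. f y + h y) x = pd i f x + pd i h x"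
  using pd_has_derivative[OF has_derivative_add[OF assms[unfolded frechet_derivative_works]]]
  by (simp add: pd_def)

lemma pd_diff:
  assumes "f differentiable (at x)" "h differentiable (at x)"
  shows "pd i (\<lambda>y. f y - h y) x = pd i f x - pd i h x"
  using pd_has_derivative[OF has_derivative_diff[OF assms[unfolded frechet_derivative_works]]]
  by (simp add: pd_def)

lemma pd_minus:
  assumes "f differentiable (at x)"
  shows "pd i (\<lambda>y. - f y) x = - pd i f x"
  using pd_has_derivative[OF has_derivative_minus[OF assms[unfolded frechet_derivative_works]]]
  by (simp add: pd_def)

lemma pd_mult:
  fixes f h :: "real^'n::finite \<Rightarrow> real"
  assumes "f differentiable (at x)" "h differentiable (at x)"
  shows "pd i (\<lambda>y. f y * h y) x = f x * pd i h x + pd i f x * h x"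
  using pd_has_derivative[OF has_derivative_mult[OF assms[unfolded frechet_derivative_works]]]
  by (simp add: pd_def)

lemma pd_sum:
  assumes "\<And>a. a \<in> S \<Longrightarrow> f a differentiable (at x)"
  shows "pd i (\<lambda>y. \<Sum>a\<in>S. f a y) x = (\<Sum>a\<in>S. pd i (f a) x)"
proof -
  have "((\<lambda>y. \<Sum>a\<in>S. f a y) has_derivative (\<lambda>v. \<Sum>a\<in>S. frechet_derivative (f a) (at x) v)) (at x)"
    using assms by (intro has_derivative_sum) (simp add: frechet_derivative_works[symmetric])
  from pd_has_derivative[OF this] show ?thesis by (simp add: pd_def)
qed

lemma differentiable_prod:
  fixes f :: "'i \<Rightarrow> 'a::real_normed_vector \<Rightarrow> 'b::real_normed_field"
  assumes "\<And>a. a \<in> S \<Longrightarrow> f a differentiable (at x)"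
  shows "(\<lambda>y. \<Prod>a\<in>S. f a y) differentiable (at x)"
proof -
  have "(f a has_derivative frechet_derivative (f a) (at x)) (at x)" if "a \<in> S" for a
    using assms[OF that] frechet_derivative_works by blast
  then have "((\<lambda>y. \<Prod>a\<in>S. f a y) has_derivative
      (\<lambda>v. \<Sum>a\<in>S. frechet_derivative (f a) (at x) v * (\<Prod>b\<in>S - {a}. f b x))) (at x)"
    by (rule has_derivative_prod)
  then show ?thesis unfolding differentiable_def by blast
qed

lemma iter_pd_append: "iter_pd (is @ js) f = iter_pd is (iter_pd js f)"
  by (induction "is") auto

lemma Cinf_on_pd: "Cinf_on U f \<Longrightarrow> Cinf_on U (pd i f)"
  unfolding Cinf_on_def by (metis iter_pd_append iter_pd.simps)

lemma Cinf_on_differentiable: "Cinf_on U f \<Longrightarrow> open U \<Longrightarrow> x \<in> U \<Longrightarrow> f differentiable (at x)"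
  unfolding Cinf_on_def by (metis differentiable_on_eq_differentiable_at iter_pd.simps(1))

section \<open>Symmetry of second partial derivatives\<close>

lemma pd_line_derivative:
  fixes f :: "real^'n::finite \<Rightarrow> real"
  assumes "f differentiable (at (a + t *\<^sub>R axis i 1))"
  shows "((\<lambda>s. f (a + s *\<^sub>R axis i 1)) has_real_derivative pd i f (a + t *\<^sub>R axis i 1)) (at t)"
proof -
  let ?e = "axis i 1 :: real^'n" and ?D = "frechet_derivative f (at (a + t *\<^sub>R axis i 1))"
  have "((\<lambda>s. a + s *\<^sub>R ?e) has_derivative (\<lambda>s. s *\<^sub>R ?e)) (at t)"
    by (auto intro!: derivative_eq_intros)
  then have "((\<lambda>s. f (a + s *\<^sub>R ?e)) has_derivative (\<lambda>s. ?D (s *\<^sub>R ?e))) (at t)"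
    using has_derivative_compose assms frechet_derivative_works by blast
  moreover have "(\<lambda>s. ?D (s *\<^sub>R ?e)) = (*) (pd i f (a + t *\<^sub>R ?e))"
    using linear_scale[OF linear_frechet_derivative[OF assms]] by (auto simp: pd_def mult.commute)
  ultimately show ?thesis unfolding has_field_derivative_def by simp
qed

definition second_difference :: "(real^'n::finite \<Rightarrow> real) \<Rightarrow> 'n \<Rightarrow> 'n \<Rightarrow> real^'n \<Rightarrow> real \<Rightarrow> real" where
  "second_difference f i j x h =
     f (x + h *\<^sub>R axis i 1 + h *\<^sub>R axis j 1) - f (x + h *\<^sub>R axis i 1) - f (x + h *\<^sub>R axis j 1) + f x"

lemma second_difference_commute: "second_difference f i j x h = second_difference f j i x h"
  unfolding second_difference_def by (simp add: algebra_simps)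

lemma second_difference_mean_value:
  fixes f :: "real^'n::finite \<Rightarrow> real"
  assumes h: "0 < h" and U: "cball x (2 * h) \<subseteq> U"
    and f: "\<And>y. y \<in> U \<Longrightarrow> f differentiable (at y)"
  obtains z where "0 < z" "z < h"
    "second_difference f i j x h
       = h * (pd i f (x + (h *\<^sub>R axis j 1 + z *\<^sub>R axis i 1)) - pd i f (x + z *\<^sub>R axis i 1))"
proof -
  let ?ei = "axis i 1 :: real^'n" and ?ej = "axis j 1 :: real^'n"
  define F where "F t = f (x + h *\<^sub>R ?ej + t *\<^sub>R ?ei) - f (x + t *\<^sub>R ?ei)" for t
  have inU: "x + v \<in> U" if "norm v \<le> 2 * h" for v
    using U that by (auto simp: dist_norm)
  have der: "DERIV F t :> pd i f (x + h *\<^sub>R ?ej + t *\<^sub>R ?ei) - pd i f (x + t *\<^sub>R ?ei)"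
    if "0 \<le> t" "t \<le> h" for t
  proof -
    have "norm (h *\<^sub>R ?ej + t *\<^sub>R ?ei) \<le> 2 * h"
      using norm_triangle_ineq[of "h *\<^sub>R ?ej" "t *\<^sub>R ?ei"] that h by simp
    then have "x + h *\<^sub>R ?ej + t *\<^sub>R ?ei \<in> U" using inU by (simp add: add.assoc)
    moreover have "x + t *\<^sub>R ?ei \<in> U" using inU that h by simp
    ultimately show ?thesis unfolding F_def by (intro DERIV_diff pd_line_derivative f)
  qed
  then obtain z where "0 < z" "z < h"
    "F h - F 0 = (h - 0) * (pd i f (x + h *\<^sub>R ?ej + z *\<^sub>R ?ei) - pd i f (x + z *\<^sub>R ?ei))"
    using MVT2[OF h der] by blast
  moreover have "F h - F 0 = second_difference f i j x h"
    unfolding F_def second_difference_def by (simp add: algebra_simps)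
  ultimately show ?thesis using that by (simp add: add.assoc)
qed

lemma has_derivative_increment_bound:
  fixes g :: "'a::real_normed_vector \<Rightarrow> real"
  assumes g: "(g has_derivative D) (at x)" and "0 < e"
  obtains d where "0 < d"
    "\<And>v w. norm v < d \<Longrightarrow> norm w < d \<Longrightarrow>
       \<bar>g (x + v) - g (x + w) - D (v - w)\<bar> \<le> e * (norm v + norm w)"
proof -
  obtain d where "0 < d"
    and d: "\<And>y. norm (y - x) < d \<Longrightarrow> \<bar>g y - g x - D (y - x)\<bar> \<le> e * norm (y - x)"
    using assms unfolding has_derivative_at_alt by (metis real_norm_def)
  have "linear D" using g by (simp add: has_derivative_linear)
  show ?thesis
  proof (rule that[OF \<open>0 < d\<close>])
    fix v w :: 'a assume "norm v < d" "norm w < d"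
    then have "\<bar>g (x + v) - g x - D v\<bar> \<le> e * norm v" "\<bar>g (x + w) - g x - D w\<bar> \<le> e * norm w"
      using d[of "x + v"] d[of "x + w"] by simp_all
    moreover have "D (v - w) = D v - D w" using linear_diff[OF \<open>linear D\<close>] .
    ultimately show "\<bar>g (x + v) - g (x + w) - D (v - w)\<bar> \<le> e * (norm v + norm w)"
      by (simp add: abs_le_iff distrib_left)
  qed
qed

lemma second_difference_estimate:
  fixes f :: "real^'n::finite \<Rightarrow> real"
  assumes h: "0 < h" and U: "cball x (2 * h) \<subseteq> U" and f: "\<And>y. y \<in> U \<Longrightarrow> f differentiable (at y)"
    and D: "linear D" and "0 \<le> e"
    and bound: "\<And>v w. norm v \<le> 2 * h \<Longrightarrow> norm w \<le> 2 * h \<Longrightarrow>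
      \<bar>pd i f (x + v) - pd i f (x + w) - D (v - w)\<bar> \<le> e * (norm v + norm w)"
  shows "\<bar>second_difference f i j x h - h\<^sup>2 * D (axis j 1)\<bar> \<le> 3 * e * h\<^sup>2"
proof -
  let ?ei = "axis i 1 :: real^'n" and ?ej = "axis j 1 :: real^'n"
  obtain z where z: "0 < z" "z < h" and mv: "second_difference f i j x h
      = h * (pd i f (x + (h *\<^sub>R ?ej + z *\<^sub>R ?ei)) - pd i f (x + z *\<^sub>R ?ei))"
    using second_difference_mean_value[OF h U f] by blast
  define v w where "v = h *\<^sub>R ?ej + z *\<^sub>R ?ei" and "w = z *\<^sub>R ?ei"
  have "norm v \<le> 2 * h"
    using norm_triangle_ineq[of "h *\<^sub>R ?ej" "z *\<^sub>R ?ei"] z h by (simp add: v_def)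
  moreover have "norm w \<le> h" using z by (simp add: w_def)
  ultimately have "\<bar>pd i f (x + v) - pd i f (x + w) - D (v - w)\<bar> \<le> e * (3 * h)"
    using bound[of v w] mult_left_mono[of "norm v + norm w" "3 * h" e] \<open>0 \<le> e\<close> h by force
  moreover have "D (v - w) = h * D ?ej" using linear_scale[OF D] by (simp add: v_def w_def)
  moreover have "second_difference f i j x h - h\<^sup>2 * D ?ej = h * (pd i f (x + v) - pd i f (x + w) - h * D ?ej)"
    unfolding mv v_def w_def by (simp add: power2_eq_square algebra_simps)
  ultimately show ?thesis
    using h mult_left_mono[of _ "e * (3 * h)" h] by (simp add: abs_mult power2_eq_square mult_ac)
qed

lemma second_difference_tendsto:
  fixes f :: "real^'n::finite \<Rightarrow> real"
  assumes U: "open U" "x \<in> U" and f: "\<And>y. y \<in> U \<Longrightarrow> f differentiable (at y)"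
    and fi: "pd i f differentiable (at x)"
  shows "((\<lambda>h. second_difference f i j x h / h\<^sup>2) \<longlongrightarrow> pd j (pd i f) x) (at_right 0)"
  unfolding tendsto_iff eventually_at_right_field dist_real_def
proof (intro allI impI)
  fix e :: real assume "0 < e"
  let ?D = "frechet_derivative (pd i f) (at x)" and ?A = "pd j (pd i f) x"
  obtain d1 where "0 < d1" and d1: "\<And>v w. norm v < d1 \<Longrightarrow> norm w < d1 \<Longrightarrow>
      \<bar>pd i f (x + v) - pd i f (x + w) - ?D (v - w)\<bar> \<le> e / 4 * (norm v + norm w)"
    using has_derivative_increment_bound[of "pd i f" ?D x "e / 4"] fi \<open>0 < e\<close>
    unfolding frechet_derivative_works by auto
  obtain d2 where "0 < d2" "cball x d2 \<subseteq> U" using U open_contains_cball by blast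
  define d where "d = min d1 d2 / 2"
  have "\<bar>second_difference f i j x h / h\<^sup>2 - ?A\<bar> < e" if h: "0 < h" "h < d" for h
  proof -
    have "\<bar>second_difference f i j x h - h\<^sup>2 * ?D (axis j 1)\<bar> \<le> 3 * (e / 4) * h\<^sup>2"
    proof (rule second_difference_estimate[OF h(1) _ f linear_frechet_derivative[OF fi]])
      show "cball x (2 * h) \<subseteq> U" using \<open>cball x d2 \<subseteq> U\<close> h by (auto simp: d_def)
      show "\<bar>pd i f (x + v) - pd i f (x + w) - ?D (v - w)\<bar> \<le> e / 4 * (norm v + norm w)"
        if "norm v \<le> 2 * h" "norm w \<le> 2 * h" for v w
        using that h by (intro d1) (auto simp: d_def)
    qed (use \<open>0 < e\<close> in simp_all)
    then have "\<bar>second_difference f i j x h / h\<^sup>2 - ?A\<bar> \<le> 3 / 4 * e"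
      using h by (simp add: pd_def[of j "pd i f"] field_simps power2_eq_square abs_div)
    then show ?thesis using \<open>0 < e\<close> by linarith
  qed
  moreover have "0 < d" using \<open>0 < d1\<close> \<open>0 < d2\<close> by (simp add: d_def)
  ultimately show "\<exists>d>0. \<forall>h>0. h < d \<longrightarrow> \<bar>second_difference f i j x h / h\<^sup>2 - ?A\<bar> < e"
    by blast
qed

lemma pd_pd_commute:
  assumes "open U" "x \<in> U" "\<And>y. y \<in> U \<Longrightarrow> f differentiable (at y)"
    and "pd i f differentiable (at x)" "pd j f differentiable (at x)"
  shows "pd j (pd i f) x = pd i (pd j f) x"
proof (rule tendsto_unique[OF trivial_limit_at_right_real])
  show "((\<lambda>h. second_difference f i j x h / h\<^sup>2) \<longlongrightarrow> pd j (pd i f) x) (at_right 0)"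
    by (rule second_difference_tendsto[OF assms(1-4)])
  show "((\<lambda>h. second_difference f i j x h / h\<^sup>2) \<longlongrightarrow> pd i (pd j f) x) (at_right 0)"
    using second_difference_tendsto[OF assms(1-3,5), of i] by (simp add: second_difference_commute)
qed

lemma Cinf_on_pd_pd_commute:
  "Cinf_on U f \<Longrightarrow> open U \<Longrightarrow> x \<in> U \<Longrightarrow> pd j (pd i f) x = pd i (pd j f) x"
  by (intro pd_pd_commute[of U]) (auto intro: Cinf_on_differentiable Cinf_on_pd)

section \<open>The inverse metric\<close>

lemma metric_matrix_nth [simp]: "metric_matrix g x $ i $ j = g x i j"
  unfolding metric_matrix_def by simp

lemma lorentzian_at_sym: "lorentzian_at g x \<Longrightarrow> g x i j = g x j i"
  unfolding lorentzian_at_def by blast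

lemma lorentzian_at_det_nonzero:
  fixes g :: "real^'n::finite \<Rightarrow> 'n \<Rightarrow> 'n \<Rightarrow> real"
  assumes "lorentzian_at g x"
  shows "det (metric_matrix g x) \<noteq> 0"
proof -
  obtain P :: "real^'n^'n" and i0 where
    "transpose P ** metric_matrix g x ** P = (\<chi> i j. if i = j then (if i = i0 then -1 else 1) else 0)"
    using assms unfolding lorentzian_at_def by blast
  moreover have "det (\<chi> i j. if i = j then (if i = i0 then -1 else 1) else 0 :: real^'n^'n) \<noteq> 0"
    by (subst det_diagonal) (auto simp: prod_zero_iff)
  ultimately show ?thesis by (metis det_mul mult_zero_left mult_zero_right)
qed

lemma metric_matrix_inverse:
  assumes "lorentzian_at g x"
  shows "metric_matrix g x ** matrix_inv (metric_matrix g x) = mat 1"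
    and "matrix_inv (metric_matrix g x) ** metric_matrix g x = mat 1"
proof -
  have "invertible (metric_matrix g x)"
    using lorentzian_at_det_nonzero[OF assms] invertible_det_nz by blast
  then have "\<exists>A'. metric_matrix g x ** A' = mat 1 \<and> A' ** metric_matrix g x = mat 1"
    unfolding invertible_def by blast
  from someI_ex[OF this]
  show "metric_matrix g x ** matrix_inv (metric_matrix g x) = mat 1"
    and "matrix_inv (metric_matrix g x) ** metric_matrix g x = mat 1"
    unfolding matrix_inv_def by blast+
qed

lemma metric_ginv:
  assumes "lorentzian_at g x"
  shows "(\<Sum>l\<in>UNIV. g x i l * ginv g x l j) = (if i = j then 1 else 0)"
  using arg_cong[OF metric_matrix_inverse(1)[OF assms], of "\<lambda>A. A $ i $ j"]
  by (simp add: matrix_matrix_mult_def mat_def ginv_def)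

lemma ginv_metric:
  assumes "lorentzian_at g x"
  shows "(\<Sum>l\<in>UNIV. ginv g x i l * g x l j) = (if i = j then 1 else 0)"
  using arg_cong[OF metric_matrix_inverse(2)[OF assms], of "\<lambda>A. A $ i $ j"]
  by (simp add: matrix_matrix_mult_def mat_def ginv_def)

lemma ginv_sym:
  assumes L: "lorentzian_at g x"
  shows "ginv g x i j = ginv g x j i"
proof -
  let ?M = "metric_matrix g x" let ?B = "matrix_inv ?M"
  have "transpose ?M = ?M" using lorentzian_at_sym[OF L] by (simp add: vec_eq_iff transpose_def)
  then have "transpose ?B ** ?M = transpose (?M ** ?B)" by (simp add: matrix_transpose_mul)
  then have left_inverse: "transpose ?B ** ?M = mat 1" by (simp add: metric_matrix_inverse(1)[OF L])
  have "transpose ?B = transpose ?B ** (?M ** ?B)" by (simp add: metric_matrix_inverse(1)[OF L])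
  also have "\<dots> = (transpose ?B ** ?M) ** ?B" by (simp add: matrix_mul_assoc)
  finally have "transpose ?B = ?B" by (simp add: left_inverse)
  then have "transpose ?B $ i $ j = ?B $ i $ j" by simp
  then show ?thesis unfolding ginv_def by (simp add: transpose_def)
qed

text \<open>Cramer's rule expresses the inverse metric rationally in the metric, which gives its smoothness.\<close>

lemma ginv_cramer:
  assumes L: "lorentzian_at g x"
  shows "ginv g x i k
    = det (\<chi> a b. if b = i then (if a = k then 1 else 0) else g x a b) / det (metric_matrix g x)"
proof -
  let ?M = "metric_matrix g x"
  have "?M *v (\<chi> l. matrix_inv ?M $ l $ k) = (\<chi> a. if a = k then 1 else 0)"
    using arg_cong[OF metric_matrix_inverse(1)[OF L], of "\<lambda>A. \<chi> a. A $ a $ k"]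
    by (simp add: matrix_matrix_mult_def matrix_vector_mult_def mat_def)
  then have "(\<chi> l. matrix_inv ?M $ l $ k)
      = (\<chi> k'. det (\<chi> a b. if b = k' then (\<chi> a. if a = k then 1 else 0) $ a else ?M $ a $ b) / det ?M)"
    using cramer[OF lorentzian_at_det_nonzero[OF L]] by blast
  moreover have "(\<chi> a b. if b = i then (\<chi> a. if a = k then 1 else 0) $ a else ?M $ a $ b)
      = (\<chi> a b. if b = i then (if a = k then 1 else 0) else g x a b)"
    by (simp add: vec_eq_iff)
  ultimately show ?thesis unfolding ginv_def by (metis (no_types, lifting) vec_lambda_beta)
qed

lemma det_differentiable:
  fixes F :: "real^'n::finite \<Rightarrow> 'm::finite \<Rightarrow> 'm \<Rightarrow> real"
  assumes "\<And>a b. (\<lambda>y. F y a b) differentiable (at x)"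
  shows "(\<lambda>y. det (\<chi> a b. F y a b)) differentiable (at x)"
  unfolding det_def
  by (auto intro!: differentiable_sum differentiable_mult differentiable_prod assms
      simp: finite_permutations)

lemma ginv_differentiable:
  assumes st: "spacetime U g" and x: "x \<in> U"
  shows "(\<lambda>y. ginv g y i k) differentiable (at x)"
proof -
  have U: "open U" "\<forall>y\<in>U. lorentzian_at g y" using st unfolding spacetime_def by blast+
  have gd: "(\<lambda>y. g y a b) differentiable (at x)" for a b
    using st x U unfolding spacetime_def by (blast intro: Cinf_on_differentiable)
  then have entries: "(\<lambda>y. if b = i then (if a = k then 1 else 0) else g y a b) differentiable (at x)"
    for a b by (cases "b = i") auto
  let ?N = "\<lambda>y. det (\<chi> a b. if b = i then (if a = k then 1 else 0) else g y a b)"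
  let ?D = "\<lambda>y. det (\<chi> a b. g y a b)"
  have mm: "metric_matrix g y = (\<chi> a b. g y a b)" for y unfolding metric_matrix_def ..
  have "(\<lambda>y. ?N y / ?D y) differentiable (at x)"
    using lorentzian_at_det_nonzero[of g x] U x unfolding mm
    by (intro differentiable_divide det_differentiable entries gd) auto
  then obtain D where "((\<lambda>y. ?N y / ?D y) has_derivative D) (at x)"
    unfolding differentiable_def by blast
  moreover have "?N y / ?D y = ginv g y i k" if "y \<in> U" for y
    using ginv_cramer[of g y i k] U that unfolding mm by simp
  ultimately have "((\<lambda>y. ginv g y i k) has_derivative D) (at x)"
    by (rule has_derivative_transform_within_open[OF _ U(1) x])
  then show ?thesis unfolding differentiable_def by blast
qed

lemma sum_raise: "(\<Sum>i\<in>UNIV. raise g X x i * F i) = gdot g x F (X x)"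
  unfolding raise_def gdot_def by (simp add: sum_distrib_left sum_distrib_right mult_ac)

lemma gdot_add_left: "gdot g x (\<lambda>i. F i + H i) a = gdot g x F a + gdot g x H a"
  unfolding gdot_def by (simp add: algebra_simps sum.distrib)

lemma gdot_diff_left: "gdot g x (\<lambda>i. F i - H i) a = gdot g x F a - gdot g x H a"
  unfolding gdot_def by (simp add: algebra_simps sum_subtractf)

lemma gdot_minus_left: "gdot g x (\<lambda>i. - F i) a = - gdot g x F a"
  unfolding gdot_def by (simp add: sum_negf)

lemma gdot_mult_left: "gdot g x (\<lambda>i. c * F i) a = c * gdot g x F a"
  unfolding gdot_def by (simp add: sum_distrib_left sum_distrib_right mult_ac)

lemma gdot_mult_left': "gdot g x (\<lambda>i. F i * c) a = gdot g x F a * c"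
  unfolding gdot_def by (simp add: sum_distrib_left sum_distrib_right mult_ac)

lemmas gdot_linear_left =
  gdot_add_left gdot_diff_left gdot_minus_left gdot_mult_left gdot_mult_left'

lemma gdot_add_right: "gdot g x a (\<lambda>i. F i + H i) = gdot g x a F + gdot g x a H"
  unfolding gdot_def by (simp add: algebra_simps sum.distrib)

lemma gdot_mult_right: "gdot g x a (\<lambda>i. c * F i) = c * gdot g x a F"
  unfolding gdot_def by (simp add: sum_distrib_left sum_distrib_right mult_ac)

lemma gdot_commute: "lorentzian_at g x \<Longrightarrow> gdot g x a c = gdot g x c a"
  unfolding gdot_def by (subst sum.swap) (simp add: ginv_sym mult_ac)

lemma gdot_metric:
  assumes "lorentzian_at g x"
  shows "gdot g x (g x j) a = a j"
proof -
  have "gdot g x (g x j) a = (\<Sum>k\<in>UNIV. \<Sum>i\<in>UNIV. g x j i * ginv g x i k * a k)"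
    unfolding gdot_def by (subst sum.swap) (simp add: mult_ac)
  also have "\<dots> = (\<Sum>k\<in>UNIV. (\<Sum>i\<in>UNIV. g x j i * ginv g x i k) * a k)"
    by (simp add: sum_distrib_right)
  also have "\<dots> = a j" by (simp add: metric_ginv[OF assms] of_bool_def[symmetric])
  finally show ?thesis .
qed

lemma gdot_quadratic:
  assumes "lorentzian_at g x"
  shows "gdot g x (\<lambda>i. s * a i + t * c i) (\<lambda>i. s * a i + t * c i)
    = s\<^sup>2 * gdot g x a a + 2 * s * t * gdot g x a c + t\<^sup>2 * gdot g x c c"
  by (simp add: gdot_add_left gdot_mult_left gdot_add_right gdot_mult_right
      gdot_commute[OF assms, of c a] power2_eq_square algebra_simps)

definition metric_trace :: "(real^'n::finite \<Rightarrow> 'n \<Rightarrow> 'n \<Rightarrow> real) \<Rightarrow> real^'n \<Rightarrow> ('n \<Rightarrow> 'n \<Rightarrow> real) \<Rightarrow> real" where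
  "metric_trace g x M = (\<Sum>i\<in>UNIV. \<Sum>k\<in>UNIV. ginv g x i k * M i k)"

lemma metric_trace_add: "metric_trace g x (\<lambda>i k. M i k + N i k) = metric_trace g x M + metric_trace g x N"
  unfolding metric_trace_def by (simp add: algebra_simps sum.distrib)

lemma metric_trace_diff: "metric_trace g x (\<lambda>i k. M i k - N i k) = metric_trace g x M - metric_trace g x N"
  unfolding metric_trace_def by (simp add: algebra_simps sum_subtractf)

lemma metric_trace_mult: "metric_trace g x (\<lambda>i k. c * M i k) = c * metric_trace g x M"
  unfolding metric_trace_def by (simp add: algebra_simps sum_distrib_left)

lemma metric_trace_tensor: "metric_trace g x (\<lambda>i k. A i * B k) = gdot g x A B"
  unfolding metric_trace_def gdot_def by (simp add: mult_ac)

lemma metric_trace_metric: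
  fixes g :: "real^'n::finite \<Rightarrow> 'n \<Rightarrow> 'n \<Rightarrow> real"
  assumes "lorentzian_at g x"
  shows "metric_trace g x (g x) = real CARD('n)"
proof -
  have "(\<Sum>k\<in>UNIV. ginv g x i k * g x i k) = (\<Sum>k\<in>UNIV. ginv g x i k * g x k i)" for i
    by (rule sum.cong[OF refl]) (metis lorentzian_at_sym[OF assms])
  then show ?thesis by (simp add: metric_trace_def ginv_metric[OF assms])
qed

text \<open>With \<open>A = \<nabla>\<phi>\<close> and \<open>s = \<phi>\<^sup>2\<close> this is \<open>R\<^sub>i\<^sub>j\<^sub>k\<^sub>m Y\<^sup>m\<close> for a field with \<open>\<nabla>\<^sub>i Y\<^sub>j = \<phi> (Y\<^sub>i Y\<^sub>j + g\<^sub>i\<^sub>j)\<close>.\<close>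

definition torse_curvature ::
    "('n \<Rightarrow> 'n \<Rightarrow> real) \<Rightarrow> ('n \<Rightarrow> real) \<Rightarrow> ('n \<Rightarrow> real) \<Rightarrow> real \<Rightarrow> 'n \<Rightarrow> 'n \<Rightarrow> 'n \<Rightarrow> real" where
  "torse_curvature G Y A s i j k =
     A i * (Y j * Y k + G j k) - A j * (Y i * Y k + G i k) + s * (Y j * G i k - Y i * G j k)"

lemma metric_trace_torse_curvature:
  fixes g :: "real^'n::finite \<Rightarrow> 'n \<Rightarrow> 'n \<Rightarrow> real"
  assumes L: "lorentzian_at g x"
  shows "metric_trace g x (\<lambda>i k. torse_curvature (g x) Y A s i j k)
    = Y j * gdot g x A Y + A j - A j * (gdot g x Y Y + real CARD('n))
      + s * (real CARD('n) - 1) * Y j"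
proof -
  have "(\<lambda>i k. torse_curvature (g x) Y A s i j k) = (\<lambda>i k. Y j * (A i * Y k) + A i * g x j k
      - (A j * (Y i * Y k) + A j * g x i k) + (s * Y j * g x i k - s * (Y i * g x j k)))"
    by (simp add: fun_eq_iff torse_curvature_def algebra_simps)
  then show ?thesis
    by (simp only: metric_trace_add metric_trace_diff metric_trace_mult metric_trace_tensor)
      (simp add: metric_trace_metric[OF L] gdot_metric[OF L] algebra_simps
        gdot_commute[OF L, of A "g x j"] gdot_commute[OF L, of Y "g x j"])
qed

lemma gdot_torse_curvature:
  assumes L: "lorentzian_at g x"
  shows "gdot g x (\<lambda>i. gdot g x (\<lambda>j. gdot g x (\<lambda>k. torse_curvature (g x) Y A s i j k) c) b) a
    = gdot g x A a * (gdot g x Y b * gdot g x Y c + gdot g x c b)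
      - gdot g x A b * (gdot g x Y a * gdot g x Y c + gdot g x c a)
      + s * (gdot g x Y b * gdot g x c a - gdot g x Y a * gdot g x c b)"
  unfolding torse_curvature_def
  by (simp only: gdot_linear_left gdot_metric[OF L])

section \<open>Curvature of the Levi-Civita connection\<close>

definition christoffel1 ::
    "(real^'n::finite \<Rightarrow> 'n \<Rightarrow> 'n \<Rightarrow> real) \<Rightarrow> 'n \<Rightarrow> 'n \<Rightarrow> 'n \<Rightarrow> real^'n \<Rightarrow> real" where
  "christoffel1 g i j m x =
     (1/2) * (pd i (\<lambda>y. g y j m) x + pd j (\<lambda>y. g y i m) x - pd m (\<lambda>y. g y i j) x)"

lemma christoffel_eq: "christoffel g k i j x = (\<Sum>l\<in>UNIV. ginv g x k l * christoffel1 g i j l x)"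
  unfolding christoffel_def christoffel1_def by (simp add: sum_distrib_left mult_ac)

definition christoffel_product ::
    "(real^'n::finite \<Rightarrow> 'n \<Rightarrow> 'n \<Rightarrow> real) \<Rightarrow> 'n \<Rightarrow> 'n \<Rightarrow> 'n \<Rightarrow> 'n \<Rightarrow> real^'n \<Rightarrow> real" where
  "christoffel_product g a b c d x = (\<Sum>p\<in>UNIV. christoffel g p a b x * christoffel1 g c d p x)"

lemma riem_antisym1: "riem g i j k m x = - riem g j i k m x"
  unfolding riem_def riem_mixed_def by (simp add: algebra_simps sum_subtractf sum_negf)

lemma pair_sym_of_antisym_bianchi:
  fixes R :: "'n \<Rightarrow> 'n \<Rightarrow> 'n \<Rightarrow> 'n \<Rightarrow> real"
  assumes a1: "\<And>i j k m. R i j k m = - R j i k m"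
    and a2: "\<And>i j k m. R i j k m = - R i j m k"
    and bianchi: "\<And>i j k m. R i j k m + R j k i m + R k i j m = 0"
  shows "R i j k m = R k m i j"
  using bianchi[of k i m j] bianchi[of i m j k] bianchi[of m j k i] bianchi[of j k i m]
    a2[of k i m j] a2[of i m k j] a2[of m j i k] a2[of j k m i]
    a1[of m k i j] a2[of k m j i] a1[of j i m k] a2[of i j m k]
  by linarith

locale spacetime_chart =
  fixes U :: "(real^'n::finite) set" and g :: "real^'n \<Rightarrow> 'n \<Rightarrow> 'n \<Rightarrow> real"
  assumes spacetime: "spacetime U g"
begin

lemma open_domain: "open U"
  using spacetime unfolding spacetime_def by blast

lemma lorentzian: "y \<in> U \<Longrightarrow> lorentzian_at g y"
  using spacetime unfolding spacetime_def by blast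

lemma metric_sym: "y \<in> U \<Longrightarrow> g y i j = g y j i"
  using lorentzian lorentzian_at_sym by blast

lemma metric_Cinf: "Cinf_on U (\<lambda>y. g y i j)"
  using spacetime unfolding spacetime_def by blast

lemma metric_differentiable: "y \<in> U \<Longrightarrow> (\<lambda>y. g y i j) differentiable (at y)"
  using metric_Cinf Cinf_on_differentiable open_domain by blast

lemma pd_metric_differentiable: "y \<in> U \<Longrightarrow> pd l (\<lambda>y. g y i j) differentiable (at y)"
  using metric_Cinf Cinf_on_differentiable open_domain Cinf_on_pd by blast

lemma pd_metric_sym: "y \<in> U \<Longrightarrow> pd l (\<lambda>y. g y i j) y = pd l (\<lambda>y. g y j i) y"
  by (rule pd_cong_open[OF open_domain]) (auto intro: metric_sym)

lemma christoffel1_sym: "y \<in> U \<Longrightarrow> christoffel1 g i j m y = christoffel1 g j i m y"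
  unfolding christoffel1_def using pd_metric_sym by simp

lemma christoffel_sym: "y \<in> U \<Longrightarrow> christoffel g k i j y = christoffel g k j i y"
  unfolding christoffel_eq using christoffel1_sym by simp

lemma pd_metric_christoffel1:
  "y \<in> U \<Longrightarrow> pd i (\<lambda>y. g y p m) y = christoffel1 g i p m y + christoffel1 g i m p y"
  unfolding christoffel1_def using pd_metric_sym[of y] by (simp add: algebra_simps)

lemma lower_christoffel:
  assumes y: "y \<in> U"
  shows "(\<Sum>p\<in>UNIV. g y p m * christoffel g p j k y) = christoffel1 g j k m y"
proof -
  have "(\<Sum>p\<in>UNIV. g y p m * christoffel g p j k y)
      = (\<Sum>p\<in>UNIV. \<Sum>l\<in>UNIV. g y m p * ginv g y p l * christoffel1 g j k l y)"
    unfolding christoffel_eq using metric_sym[OF y] by (simp add: sum_distrib_left mult_ac)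
  also have "\<dots> = (\<Sum>l\<in>UNIV. (\<Sum>p\<in>UNIV. g y m p * ginv g y p l) * christoffel1 g j k l y)"
    by (subst sum.swap) (simp add: sum_distrib_right)
  also have "\<dots> = christoffel1 g j k m y"
    by (simp add: metric_ginv[OF lorentzian[OF y]] of_bool_def[symmetric])
  finally show ?thesis .
qed

lemma christoffel1_differentiable: "y \<in> U \<Longrightarrow> christoffel1 g i j m differentiable (at y)"
  unfolding christoffel1_def[abs_def]
  by (intro differentiable_mult differentiable_add differentiable_diff differentiable_const
      pd_metric_differentiable)

lemma christoffel_differentiable: "y \<in> U \<Longrightarrow> christoffel g k i j differentiable (at y)"
  unfolding christoffel_eq[abs_def]
  by (intro differentiable_sum ballI differentiable_mult ginv_differentiable[OF spacetime]
      christoffel1_differentiable) simp_all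

lemma pd_christoffel1_sym: "y \<in> U \<Longrightarrow> pd l (christoffel1 g a b m) y = pd l (christoffel1 g b a m) y"
  by (rule pd_cong_open[OF open_domain]) (auto intro: christoffel1_sym)

lemma riem_mixed_eq:
  assumes x: "x \<in> U"
  shows "riem_mixed g i j k m x =
     - pd i (christoffel g m j k) x + pd j (christoffel g m i k) x
     + (\<Sum>p\<in>UNIV. christoffel g p i k x * christoffel g m j p x)
     - (\<Sum>p\<in>UNIV. christoffel g p j k x * christoffel g m i p x)"
proof -
  have "cov1 g (\<lambda>y l. if l = m then 1 else 0) a b = (\<lambda>y. - christoffel g m a b y)" for a b
    unfolding cov1_def by (simp add: fun_eq_iff of_bool_def[symmetric])
  then show ?thesis
    unfolding riem_mixed_def cov2_def
    using pd_minus[OF christoffel_differentiable[OF x]] christoffel_sym[OF x] by (simp add: sum_negf)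
qed

lemma christoffel_product_swap:
  assumes x: "x \<in> U"
  shows "christoffel_product g a b c d x = christoffel_product g c d a b x"
proof -
  have "christoffel_product g a b c d x
      = (\<Sum>p\<in>UNIV. \<Sum>l\<in>UNIV. ginv g x p l * christoffel1 g a b l x * christoffel1 g c d p x)"
    unfolding christoffel_product_def christoffel_eq by (simp add: sum_distrib_right)
  also have "\<dots> = (\<Sum>l\<in>UNIV. \<Sum>p\<in>UNIV. ginv g x l p * christoffel1 g a b l x * christoffel1 g c d p x)"
    by (subst sum.swap) (simp add: ginv_sym[OF lorentzian[OF x]])
  also have "\<dots> = christoffel_product g c d a b x"
    unfolding christoffel_product_def christoffel_eq
    by (simp add: sum_distrib_right sum_distrib_left mult_ac)
  finally show ?thesis .
qed

lemma christoffel_product_sym: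
  "x \<in> U \<Longrightarrow> christoffel_product g a b c d x = christoffel_product g b a c d x"
  unfolding christoffel_product_def using christoffel_sym by simp

lemma lower_pd_christoffel:
  assumes x: "x \<in> U"
  shows "(\<Sum>p\<in>UNIV. g x p m * pd i (christoffel g p j k) x)
       = pd i (christoffel1 g j k m) x - (\<Sum>p\<in>UNIV. pd i (\<lambda>y. g y p m) x * christoffel g p j k x)"
proof -
  have "pd i (christoffel1 g j k m) x = pd i (\<lambda>y. \<Sum>p\<in>UNIV. g y p m * christoffel g p j k y) x"
    by (rule pd_cong_open[OF open_domain x]) (simp add: lower_christoffel)
  also have "\<dots> = (\<Sum>p\<in>UNIV. pd i (\<lambda>y. g y p m * christoffel g p j k y) x)"
    by (rule pd_sum) (auto intro!: differentiable_mult metric_differentiable[OF x]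
        christoffel_differentiable[OF x, unfolded eta_contract_eq[symmetric]])
  also have "\<dots> = (\<Sum>p\<in>UNIV. g x p m * pd i (christoffel g p j k) x
      + pd i (\<lambda>y. g y p m) x * christoffel g p j k x)"
    using pd_mult[OF metric_differentiable[OF x] christoffel_differentiable[OF x]] by simp
  finally show ?thesis by (simp add: sum.distrib)
qed

lemma riem_eq:
  assumes x: "x \<in> U"
  shows "riem g i j k m x = - pd i (christoffel1 g j k m) x + pd j (christoffel1 g i k m) x
    + christoffel_product g j k i m x - christoffel_product g i k j m x"
proof -
  let ?c = "\<lambda>p a b. christoffel g p a b x"
  have quadratic: "(\<Sum>p\<in>UNIV. g x p m * (\<Sum>q\<in>UNIV. ?c q a b * ?c p d q))
      = (\<Sum>q\<in>UNIV. ?c q a b * christoffel1 g d q m x)" for a b d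
  proof -
    have "(\<Sum>p\<in>UNIV. g x p m * (\<Sum>q\<in>UNIV. ?c q a b * ?c p d q))
        = (\<Sum>q\<in>UNIV. \<Sum>p\<in>UNIV. ?c q a b * (g x p m * ?c p d q))"
      by (subst sum.swap) (simp add: sum_distrib_left mult_ac)
    also have "\<dots> = (\<Sum>q\<in>UNIV. ?c q a b * christoffel1 g d q m x)"
      by (simp add: sum_distrib_left[symmetric] lower_christoffel[OF x])
    finally show ?thesis .
  qed
  have "riem g i j k m x =
     - (\<Sum>p\<in>UNIV. g x p m * pd i (christoffel g p j k) x)
     + (\<Sum>p\<in>UNIV. g x p m * pd j (christoffel g p i k) x)
     + (\<Sum>p\<in>UNIV. g x p m * (\<Sum>q\<in>UNIV. ?c q i k * ?c p j q))
     - (\<Sum>p\<in>UNIV. g x p m * (\<Sum>q\<in>UNIV. ?c q j k * ?c p i q))"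
    unfolding riem_def riem_mixed_eq[OF x]
    by (simp add: algebra_simps sum.distrib sum_subtractf sum_negf)
  then show ?thesis
    unfolding lower_pd_christoffel[OF x] quadratic christoffel_product_def
      pd_metric_christoffel1[OF x]
    by (simp add: algebra_simps sum.distrib)
qed

text \<open>The second antisymmetry is where the symmetry of second derivatives of the metric enters.\<close>

lemma riem_antisym2:
  assumes x: "x \<in> U"
  shows "riem g i j k m x = - riem g i j m k x"
proof -
  have pd_metric: "pd a (christoffel1 g b k m) x + pd a (christoffel1 g b m k) x
      = pd a (pd b (\<lambda>y. g y k m)) x" for a b
  proof -
    have "pd a (christoffel1 g b k m) x + pd a (christoffel1 g b m k) x
        = pd a (\<lambda>y. christoffel1 g b k m y + christoffel1 g b m k y) x"
      using pd_add[OF christoffel1_differentiable[OF x] christoffel1_differentiable[OF x]] by simp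
    also have "\<dots> = pd a (pd b (\<lambda>y. g y k m)) x"
      by (rule pd_cong_open[OF open_domain x]) (simp add: pd_metric_christoffel1)
    finally show ?thesis .
  qed
  have "pd i (pd j (\<lambda>y. g y k m)) x = pd j (pd i (\<lambda>y. g y k m)) x"
    by (rule Cinf_on_pd_pd_commute[OF metric_Cinf open_domain x])
  then show ?thesis
    unfolding riem_eq[OF x]
    using pd_metric[of i j] pd_metric[of j i] christoffel_product_swap[OF x, of j m i k]
      christoffel_product_swap[OF x, of i m j k]
    by (simp add: algebra_simps)
qed

lemma riem_bianchi:
  assumes x: "x \<in> U"
  shows "riem g i j k m x + riem g j k i m x + riem g k i j m x = 0"
  unfolding riem_eq[OF x]
  using pd_christoffel1_sym[OF x, of i k j m] pd_christoffel1_sym[OF x, of j k i m]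
    pd_christoffel1_sym[OF x, of k j i m] christoffel_product_sym[OF x, of k i j m]
    christoffel_product_sym[OF x, of j i k m] christoffel_product_sym[OF x, of k j i m]
  by (simp add: algebra_simps)

lemma ricci_sym:
  assumes x: "x \<in> U"
  shows "ricci g j m x = ricci g m j x"
proof -
  have pair: "riem g i j k m x = riem g k m i j x" for i j k m
    by (rule pair_sym_of_antisym_bianchi[of "\<lambda>i j k m. riem g i j k m x"])
      (auto intro: riem_antisym1 riem_antisym2[OF x] riem_bianchi[OF x])
  have "ricci g j m x = (\<Sum>i\<in>UNIV. \<Sum>k\<in>UNIV. ginv g x i k * riem g k m i j x)"
    unfolding ricci_def by (simp only: pair[of _ j _ m])
  also have "\<dots> = (\<Sum>k\<in>UNIV. \<Sum>i\<in>UNIV. ginv g x i k * riem g k m i j x)"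
    by (rule sum.swap)
  also have "\<dots> = ricci g m j x"
    unfolding ricci_def using ginv_sym[OF lorentzian[OF x]] by simp
  finally show ?thesis .
qed

end

section \<open>The Ricci identity\<close>

context spacetime_chart
begin

lemma pd_cov1:
  assumes x: "x \<in> U" and X: "\<And>k. Cinf_on U (\<lambda>y. X y k)"
  shows "pd i (cov1 g X j k) x = pd i (pd j (\<lambda>y. X y k)) x
     - (\<Sum>p\<in>UNIV. christoffel g p j k x * pd i (\<lambda>y. X y p) x)
     - (\<Sum>p\<in>UNIV. pd i (christoffel g p j k) x * X x p)"
proof -
  have Xd: "(\<lambda>y. X y p) differentiable (at x)" for p
    using X Cinf_on_differentiable open_domain x by blast
  have "pd j (\<lambda>y. X y k) differentiable (at x)"
    using X Cinf_on_differentiable open_domain x Cinf_on_pd by blast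
  moreover have "(\<lambda>y. \<Sum>p\<in>UNIV. christoffel g p j k y * X y p) differentiable (at x)"
    by (intro differentiable_sum ballI differentiable_mult christoffel_differentiable[OF x] Xd) simp
  ultimately have "pd i (cov1 g X j k) x
      = pd i (pd j (\<lambda>y. X y k)) x - pd i (\<lambda>y. \<Sum>p\<in>UNIV. christoffel g p j k y * X y p) x"
    unfolding cov1_def using pd_diff by blast
  also have "pd i (\<lambda>y. \<Sum>p\<in>UNIV. christoffel g p j k y * X y p) x
      = (\<Sum>p\<in>UNIV. christoffel g p j k x * pd i (\<lambda>y. X y p) x + pd i (christoffel g p j k) x * X x p)"
    using pd_mult[OF christoffel_differentiable[OF x] Xd]
    by (subst pd_sum) (auto intro!: differentiable_mult christoffel_differentiable[OF x] Xd)
  finally show ?thesis by (simp add: sum.distrib)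
qed

lemma ricci_identity:
  assumes x: "x \<in> U" and X: "\<And>k. Cinf_on U (\<lambda>y. X y k)"
  shows "cov2 g X i j k x - cov2 g X j i k x = (\<Sum>m\<in>UNIV. riem_mixed g i j k m x * X x m)"
proof -
  let ?c = "\<lambda>p a b. christoffel g p a b x"
  have cov2: "cov2 g X a b k x = pd a (pd b (\<lambda>y. X y k)) x
     - (\<Sum>p\<in>UNIV. ?c p b k * pd a (\<lambda>y. X y p) x) - (\<Sum>p\<in>UNIV. pd a (christoffel g p b k) x * X x p)
     - (\<Sum>p\<in>UNIV. ?c p a b * cov1 g X p k x) - (\<Sum>p\<in>UNIV. ?c p a k * pd b (\<lambda>y. X y p) x)
     + (\<Sum>p\<in>UNIV. ?c p a k * (\<Sum>q\<in>UNIV. ?c q b p * X x q))" for a b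
    unfolding cov2_def pd_cov1[OF x X] cov1_def
    by (simp add: right_diff_distrib sum_subtractf)
  have reorder: "(\<Sum>m\<in>UNIV. (\<Sum>p\<in>UNIV. ?c p a k * ?c m b p) * X x m)
      = (\<Sum>p\<in>UNIV. ?c p a k * (\<Sum>q\<in>UNIV. ?c q b p * X x q))" for a b
  proof -
    have "(\<Sum>m\<in>UNIV. (\<Sum>p\<in>UNIV. ?c p a k * ?c m b p) * X x m)
        = (\<Sum>m\<in>UNIV. \<Sum>p\<in>UNIV. ?c p a k * (?c m b p * X x m))"
      by (simp add: sum_distrib_left sum_distrib_right mult_ac)
    also have "\<dots> = (\<Sum>p\<in>UNIV. ?c p a k * (\<Sum>q\<in>UNIV. ?c q b p * X x q))"
      by (subst sum.swap) (simp add: sum_distrib_left)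
    finally show ?thesis .
  qed
  have "pd i (pd j (\<lambda>y. X y k)) x = pd j (pd i (\<lambda>y. X y k)) x"
    by (rule Cinf_on_pd_pd_commute[OF X open_domain x])
  moreover have "(\<Sum>p\<in>UNIV. ?c p i j * cov1 g X p k x) = (\<Sum>p\<in>UNIV. ?c p j i * cov1 g X p k x)"
    using christoffel_sym[OF x] by simp
  ultimately show ?thesis
    unfolding cov2 riem_mixed_eq[OF x] reorder[symmetric]
    by (simp add: algebra_simps sum.distrib sum_subtractf sum_negf)
qed

lemma riem_raise:
  assumes x: "x \<in> U"
  shows "(\<Sum>m\<in>UNIV. riem g i j k m x * raise g W x m) = (\<Sum>p\<in>UNIV. riem_mixed g i j k p x * W x p)"
proof -
  have "(\<Sum>m\<in>UNIV. riem g i j k m x * raise g W x m)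
     = (\<Sum>m\<in>UNIV. \<Sum>p\<in>UNIV. \<Sum>l\<in>UNIV. riem_mixed g i j k p x * W x l * (g x p m * ginv g x m l))"
    unfolding riem_def raise_def by (simp add: sum_distrib_left sum_distrib_right mult_ac)
  also have "\<dots> = (\<Sum>p\<in>UNIV. \<Sum>m\<in>UNIV. \<Sum>l\<in>UNIV. riem_mixed g i j k p x * W x l * (g x p m * ginv g x m l))"
    by (rule sum.swap)
  also have "\<dots> = (\<Sum>p\<in>UNIV. \<Sum>l\<in>UNIV. \<Sum>m\<in>UNIV. riem_mixed g i j k p x * W x l * (g x p m * ginv g x m l))"
    by (rule sum.cong[OF refl], rule sum.swap)
  also have "\<dots> = (\<Sum>p\<in>UNIV. \<Sum>l\<in>UNIV. riem_mixed g i j k p x * W x l * (\<Sum>m\<in>UNIV. g x p m * ginv g x m l))"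
    by (simp add: sum_distrib_left)
  also have "\<dots> = (\<Sum>p\<in>UNIV. riem_mixed g i j k p x * W x p)"
    by (simp add: metric_ginv[OF lorentzian[OF x]] of_bool_def[symmetric])
  finally show ?thesis .
qed

end

lemma ricci_raise:
  "(\<Sum>m\<in>UNIV. ricci g j m x * raise g W x m)
     = metric_trace g x (\<lambda>i k. \<Sum>m\<in>UNIV. riem g i j k m x * raise g W x m)"
proof -
  have "(\<Sum>m\<in>UNIV. ricci g j m x * raise g W x m)
     = (\<Sum>m\<in>UNIV. \<Sum>i\<in>UNIV. \<Sum>k\<in>UNIV. ginv g x i k * (riem g i j k m x * raise g W x m))"
    unfolding ricci_def by (simp add: sum_distrib_left sum_distrib_right mult_ac)
  also have "\<dots> = (\<Sum>i\<in>UNIV. \<Sum>m\<in>UNIV. \<Sum>k\<in>UNIV. ginv g x i k * (riem g i j k m x * raise g W x m))"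
    by (rule sum.swap)
  also have "\<dots> = (\<Sum>i\<in>UNIV. \<Sum>k\<in>UNIV. \<Sum>m\<in>UNIV. ginv g x i k * (riem g i j k m x * raise g W x m))"
    by (rule sum.cong[OF refl], rule sum.swap)
  finally show ?thesis unfolding metric_trace_def by (simp add: sum_distrib_left)
qed

definition riem_form :: "(real^'n::finite \<Rightarrow> 'n \<Rightarrow> 'n \<Rightarrow> real) \<Rightarrow> real^'n \<Rightarrow>
    ('n \<Rightarrow> real) \<Rightarrow> ('n \<Rightarrow> real) \<Rightarrow> ('n \<Rightarrow> real) \<Rightarrow> ('n \<Rightarrow> real) \<Rightarrow> real" where
  "riem_form g x A B C D =
     (\<Sum>i\<in>UNIV. \<Sum>j\<in>UNIV. \<Sum>k\<in>UNIV. \<Sum>m\<in>UNIV. riem g i j k m x * A i * B j * C k * D m)"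

definition ricci_form :: "(real^'n::finite \<Rightarrow> 'n \<Rightarrow> 'n \<Rightarrow> real) \<Rightarrow> real^'n \<Rightarrow>
    ('n \<Rightarrow> real) \<Rightarrow> ('n \<Rightarrow> real) \<Rightarrow> real" where
  "ricci_form g x A B = (\<Sum>i\<in>UNIV. \<Sum>j\<in>UNIV. ricci g i j x * A i * B j)"

lemma antisymmetric_form_diagonal:
  fixes M :: "'n::finite \<Rightarrow> 'n \<Rightarrow> real"
  assumes "\<And>i j. M i j = - M j i"
  shows "(\<Sum>i\<in>UNIV. \<Sum>j\<in>UNIV. M i j * a i * a j) = 0"
proof -
  have "(\<Sum>i\<in>UNIV. \<Sum>j\<in>UNIV. M i j * a i * a j) = (\<Sum>j\<in>UNIV. \<Sum>i\<in>UNIV. M i j * a i * a j)"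
    by (rule sum.swap)
  also have "\<dots> = (\<Sum>j\<in>UNIV. \<Sum>i\<in>UNIV. - (M j i * a j * a i))"
    by (intro sum.cong refl) (subst assms, simp)
  also have "\<dots> = - (\<Sum>j\<in>UNIV. \<Sum>i\<in>UNIV. M j i * a j * a i)"
    by (simp add: sum_negf)
  finally show ?thesis by simp
qed

lemma riem_form_diagonal12: "riem_form g x A A C D = 0"
proof -
  have "riem_form g x A A C D
      = (\<Sum>i\<in>UNIV. \<Sum>j\<in>UNIV. (\<Sum>k\<in>UNIV. \<Sum>m\<in>UNIV. riem g i j k m x * C k * D m) * A i * A j)"
    unfolding riem_form_def by (simp add: sum_distrib_left sum_distrib_right mult_ac)
  also have "\<dots> = 0"
    by (rule antisymmetric_form_diagonal) (subst riem_antisym1, simp add: sum_negf)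
  finally show ?thesis .
qed

lemma riem_form_lincomb2:
  "riem_form g x A (\<lambda>j. s * B j + t * B' j) C D = s * riem_form g x A B C D + t * riem_form g x A B' C D"
  unfolding riem_form_def by (simp add: algebra_simps sum.distrib sum_distrib_left)

lemma riem_form_lincomb4:
  "riem_form g x A B C (\<lambda>m. s * D m + t * D' m) = s * riem_form g x A B C D + t * riem_form g x A B C D'"
  unfolding riem_form_def by (simp add: algebra_simps sum.distrib sum_distrib_left)

lemma riem_form_raise:
  "riem_form g x (raise g a x) (raise g b x) (raise g c x) V
     = gdot g x (\<lambda>i. gdot g x (\<lambda>j. gdot g x (\<lambda>k. \<Sum>m\<in>UNIV. riem g i j k m x * V m) (c x)) (b x)) (a x)"
proof -
  have "riem_form g x (raise g a x) (raise g b x) (raise g c x) V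
      = (\<Sum>i\<in>UNIV. raise g a x i * (\<Sum>j\<in>UNIV. raise g b x j *
          (\<Sum>k\<in>UNIV. raise g c x k * (\<Sum>m\<in>UNIV. riem g i j k m x * V m))))"
    unfolding riem_form_def by (simp add: sum_distrib_left mult_ac)
  then show ?thesis by (simp only: sum_raise)
qed

lemma ricci_form_lincomb_left:
  "ricci_form g x (\<lambda>i. s * A i + t * A' i) B = s * ricci_form g x A B + t * ricci_form g x A' B"
  unfolding ricci_form_def by (simp add: algebra_simps sum.distrib sum_distrib_left)

lemma ricci_form_lincomb_right:
  "ricci_form g x A (\<lambda>j. s * B j + t * B' j) = s * ricci_form g x A B + t * ricci_form g x A B'"
  unfolding ricci_form_def by (simp add: algebra_simps sum.distrib sum_distrib_left)

lemma ricci_form_raise: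
  "ricci_form g x (raise g a x) V = gdot g x (\<lambda>j. \<Sum>m\<in>UNIV. ricci g j m x * V m) (a x)"
proof -
  have "ricci_form g x (raise g a x) V = (\<Sum>j\<in>UNIV. raise g a x j * (\<Sum>m\<in>UNIV. ricci g j m x * V m))"
    unfolding ricci_form_def by (simp add: sum_distrib_left mult_ac)
  then show ?thesis by (simp only: sum_raise)
qed

lemma raise_lincomb:
  "X x = (\<lambda>i. s * Y x i + t * Z x i) \<Longrightarrow> raise g X x = (\<lambda>i. s * raise g Y x i + t * raise g Z x i)"
  unfolding raise_def by (simp add: fun_eq_iff algebra_simps sum.distrib sum_distrib_left)

context spacetime_chart
begin

lemma riem_form_diagonal34:
  assumes x: "x \<in> U"
  shows "riem_form g x A B C C = 0"
proof -
  have "riem_form g x A B C C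
      = (\<Sum>i\<in>UNIV. \<Sum>j\<in>UNIV. A i * B j * (\<Sum>k\<in>UNIV. \<Sum>m\<in>UNIV. riem g i j k m x * C k * C m))"
    unfolding riem_form_def by (simp add: sum_distrib_left mult_ac)
  also have "\<dots> = 0"
  proof -
    have "(\<Sum>k\<in>UNIV. \<Sum>m\<in>UNIV. riem g i j k m x * C k * C m) = 0" for i j
      by (rule antisymmetric_form_diagonal) (rule riem_antisym2[OF x])
    then show ?thesis by simp
  qed
  finally show ?thesis .
qed

lemma riem_form_boost:
  assumes "x \<in> U"
  shows "riem_form g x A (\<lambda>i. s * B i + t * A i) A (\<lambda>i. s * B i + t * A i) = s\<^sup>2 * riem_form g x A B A B"
  by (simp add: riem_form_lincomb2 riem_form_lincomb4 riem_form_diagonal12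
      riem_form_diagonal34[OF assms] power2_eq_square)

lemma ricci_form_commute:
  assumes x: "x \<in> U"
  shows "ricci_form g x A B = ricci_form g x B A"
  unfolding ricci_form_def by (subst sum.swap) (simp add: ricci_sym[OF x] mult_ac)

lemma ricci_form_quadratic:
  assumes x: "x \<in> U"
  shows "ricci_form g x (\<lambda>i. s * A i + t * B i) (\<lambda>i. s * A i + t * B i)
    = s\<^sup>2 * ricci_form g x A A + 2 * s * t * ricci_form g x A B + t\<^sup>2 * ricci_form g x B B"
  by (simp add: ricci_form_lincomb_left ricci_form_lincomb_right ricci_form_commute[OF x, of B A]
      power2_eq_square algebra_simps)

end

section \<open>Torse-forming fields\<close>

context spacetime_chart
begin

definition torse_forming :: "(real^'n \<Rightarrow> 'n \<Rightarrow> real) \<Rightarrow> (real^'n \<Rightarrow> real) \<Rightarrow> bool" where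
  "torse_forming u phi \<longleftrightarrow> (\<forall>k. Cinf_on U (\<lambda>y. u y k)) \<and> Cinf_on U phi \<and>
     (\<forall>y\<in>U. \<forall>i j. cov1 g u i j y = phi y * (u y i * u y j + g y i j))"

lemma pd_torse_forming:
  assumes "torse_forming u phi" "x \<in> U"
  shows "pd i (\<lambda>y. u y a) x = phi x * (u x i * u x a + g x i a) + (\<Sum>p\<in>UNIV. christoffel g p i a x * u x p)"
  using assms unfolding torse_forming_def cov1_def by (simp add: diff_eq_eq)

lemma christoffel_cov1_torse_forming:
  assumes tf: "torse_forming u phi" and x: "x \<in> U"
  shows "(\<Sum>p\<in>UNIV. christoffel g p a b x * cov1 g u p c x)
    = phi x * ((\<Sum>p\<in>UNIV. christoffel g p a b x * u x p) * u x c + christoffel1 g a b c x)"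
proof -
  have "(\<Sum>p\<in>UNIV. christoffel g p a b x * cov1 g u p c x)
      = phi x * ((\<Sum>p\<in>UNIV. christoffel g p a b x * u x p) * u x c
        + (\<Sum>p\<in>UNIV. g x p c * christoffel g p a b x))"
    using tf x unfolding torse_forming_def
    by (simp add: algebra_simps sum.distrib sum_distrib_left sum_distrib_right)
  then show ?thesis by (simp add: lower_christoffel[OF x])
qed

lemma cov1_torse_forming_sym:
  "torse_forming u phi \<Longrightarrow> x \<in> U \<Longrightarrow> cov1 g u i j x = cov1 g u j i x"
  unfolding torse_forming_def using metric_sym by (simp add: mult.commute)

lemma pd_cov1_torse_forming:
  assumes tf: "torse_forming u phi" and x: "x \<in> U"
  shows "pd i (cov1 g u j k) x = phi x * (u x j * pd i (\<lambda>y. u y k) x + pd i (\<lambda>y. u y j) x * u x k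
      + pd i (\<lambda>y. g y j k) x) + pd i phi x * (u x j * u x k + g x j k)"
proof -
  have ud: "(\<lambda>y. u y a) differentiable (at x)" for a
    using tf Cinf_on_differentiable open_domain x unfolding torse_forming_def by blast
  have "phi differentiable (at x)"
    using tf Cinf_on_differentiable open_domain x unfolding torse_forming_def by blast
  moreover have "(\<lambda>y. u y j * u y k + g y j k) differentiable (at x)"
    by (intro differentiable_add differentiable_mult ud metric_differentiable[OF x])
  moreover have "pd i (cov1 g u j k) x = pd i (\<lambda>y. phi y * (u y j * u y k + g y j k)) x"
    by (rule pd_cong_open[OF open_domain x]) (use tf in \<open>simp add: torse_forming_def\<close>)
  ultimately have "pd i (cov1 g u j k) x
      = phi x * pd i (\<lambda>y. u y j * u y k + g y j k) x + pd i phi x * (u x j * u x k + g x j k)"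
    using pd_mult by simp
  also have "pd i (\<lambda>y. u y j * u y k + g y j k) x
      = u x j * pd i (\<lambda>y. u y k) x + pd i (\<lambda>y. u y j) x * u x k + pd i (\<lambda>y. g y j k) x"
    using pd_add[OF differentiable_mult[OF ud ud] metric_differentiable[OF x], of i]
      pd_mult[OF ud ud, of i] by simp
  finally show ?thesis .
qed

lemma cov2_torse_forming:
  assumes tf: "torse_forming u phi" and x: "x \<in> U"
  shows "cov2 g u i j k x = pd i phi x * (u x j * u x k + g x j k)
    + (phi x)\<^sup>2 * ((u x i * u x j + g x i j) * u x k + u x j * (u x i * u x k + g x i k))"
proof -
  have "(\<Sum>p\<in>UNIV. christoffel g p i k x * cov1 g u j p x)
      = (\<Sum>p\<in>UNIV. christoffel g p i k x * cov1 g u p j x)"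
    using cov1_torse_forming_sym[OF tf x] by simp
  then show ?thesis
    unfolding cov2_def pd_cov1_torse_forming[OF tf x] christoffel_cov1_torse_forming[OF tf x]
      pd_torse_forming[OF tf x] pd_metric_christoffel1[OF x]
    by (simp add: algebra_simps power2_eq_square)
qed

lemma riem_torse_forming:
  assumes tf: "torse_forming u phi" and x: "x \<in> U"
  shows "(\<Sum>m\<in>UNIV. riem g i j k m x * raise g u x m)
    = torse_curvature (g x) (u x) (\<lambda>k. pd k phi x) ((phi x)\<^sup>2) i j k"
proof -
  have smooth: "\<And>k. Cinf_on U (\<lambda>y. u y k)" using tf unfolding torse_forming_def by blast
  show ?thesis
    unfolding riem_raise[OF x] ricci_identity[OF x smooth, symmetric] cov2_torse_forming[OF tf x]
      torse_curvature_def
    using metric_sym[OF x, of i j] by (simp add: algebra_simps power2_eq_square)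
qed

lemma ricci_form_torse_forming:
  fixes u :: "real^'n \<Rightarrow> 'n \<Rightarrow> real"
  assumes tf: "torse_forming u phi" and x: "x \<in> U" and unit: "gdot g x (u x) (u x) = -1"
  shows "ricci_form g x (raise g a x) (raise g u x)
    = gdot g x (u x) (a x) * (gdot g x (\<lambda>k. pd k phi x) (u x) + (real CARD('n) - 1) * (phi x)\<^sup>2)
      - (real CARD('n) - 2) * gdot g x (\<lambda>k. pd k phi x) (a x)"
  unfolding ricci_form_raise ricci_raise riem_torse_forming[OF tf x]
    metric_trace_torse_curvature[OF lorentzian[OF x]]
  by (simp only: gdot_linear_left) (simp add: unit algebra_simps)

lemma riem_form_torse_forming:
  assumes tf: "torse_forming u phi" and x: "x \<in> U" and unit: "gdot g x (u x) (u x) = -1"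
  shows "riem_form g x (raise g a x) (raise g u x) (raise g c x) (raise g u x)
    = - (gdot g x (\<lambda>k. pd k phi x) (u x) + (phi x)\<^sup>2)
        * (gdot g x (c x) (a x) + gdot g x (u x) (a x) * gdot g x (u x) (c x))"
  unfolding riem_form_raise riem_torse_forming[OF tf x] gdot_torse_curvature[OF lorentzian[OF x]]
  by (simp add: unit gdot_commute[OF lorentzian[OF x], of "c x" "u x"] algebra_simps)

lemma ricci_form_torse_forming_orthogonal:
  fixes u b :: "real^'n \<Rightarrow> 'n \<Rightarrow> real"
  assumes tf: "torse_forming u phi" and x: "x \<in> U"
    and uu: "gdot g x (u x) (u x) = -1" and bb: "gdot g x (b x) (b x) = 1"
    and ub: "gdot g x (u x) (b x) = 0"
    and dphi: "(\<lambda>k. pd k phi x) = (\<lambda>k. - u x k * P + v * b x k)"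
  shows "ricci_form g x (raise g u x) (raise g b x) = - (real CARD('n) - 2) * v"
proof -
  have "gdot g x (\<lambda>k. pd k phi x) (b x) = v"
    unfolding dphi using bb ub by (simp add: gdot_linear_left)
  then show ?thesis
    using ricci_form_commute[OF x] ricci_form_torse_forming[OF tf x uu, of b] ub
    by (simp add: gdot_commute[OF lorentzian[OF x], of "b x" "u x"] algebra_simps)
qed

lemma ricci_form_boost_torse_forming:
  fixes u w b :: "real^'n \<Rightarrow> 'n \<Rightarrow> real"
  assumes tu: "torse_forming u phi" and tw: "torse_forming w lam" and x: "x \<in> U"
    and uu: "gdot g x (u x) (u x) = -1" and ww: "gdot g x (w x) (w x) = -1"
    and bb: "gdot g x (b x) (b x) = 1" and ub: "gdot g x (u x) (b x) = 0"
    and w: "w x = (\<lambda>i. C * u x i + S * b x i)" and "C \<noteq> 0"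
  shows "ricci_form g x (raise g w x) (raise g w x) = ricci_form g x (raise g u x) (raise g u x)"
proof -
  have L: "lorentzian_at g x" by (rule lorentzian[OF x])
  define P Q where "P = gdot g x (\<lambda>k. pd k phi x) (u x)" and "Q = gdot g x (\<lambda>k. pd k lam x) (w x)"
  have wb: "gdot g x (w x) (b x) = S"
    unfolding w using bb ub by (simp add: gdot_add_left gdot_mult_left)
  have CS: "C\<^sup>2 = 1 + S\<^sup>2"
    using ww unfolding w gdot_quadratic[OF L] uu bb ub by simp
  have "C\<^sup>2 * - (P + (phi x)\<^sup>2)
      = C\<^sup>2 * riem_form g x (raise g b x) (raise g u x) (raise g b x) (raise g u x)"
    using riem_form_torse_forming[OF tu x uu, of b b] by (simp add: P_def bb ub)
  also have "\<dots> = riem_form g x (raise g b x) (raise g w x) (raise g b x) (raise g w x)"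
    unfolding raise_lincomb[where X = w and Y = u and Z = b, OF w]
    by (rule riem_form_boost[OF x, symmetric])
  also have "\<dots> = - (Q + (lam x)\<^sup>2) * C\<^sup>2"
    using riem_form_torse_forming[OF tw x ww, of b b]
    by (simp add: Q_def bb wb CS power2_eq_square[symmetric])
  finally have "C\<^sup>2 * (P + (phi x)\<^sup>2) = C\<^sup>2 * (Q + (lam x)\<^sup>2)"
    by (simp add: algebra_simps)
  then have "P + (phi x)\<^sup>2 = Q + (lam x)\<^sup>2"
    using \<open>C \<noteq> 0\<close> by simp
  moreover have "ricci_form g x (raise g u x) (raise g u x) = - (real CARD('n) - 1) * (P + (phi x)\<^sup>2)"
    using ricci_form_torse_forming[OF tu x uu, of u] by (simp add: P_def uu algebra_simps)
  moreover have "ricci_form g x (raise g w x) (raise g w x) = - (real CARD('n) - 1) * (Q + (lam x)\<^sup>2)"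
    using ricci_form_torse_forming[OF tw x ww, of w] by (simp add: Q_def ww algebra_simps)
  ultimately show ?thesis by simp
qed

end

lemma tanh_eq_of_boost_invariant:
  fixes a ruu rub rbb :: real
  assumes "a \<noteq> 0" "rub \<noteq> 0"
    and invariant: "(cosh a)\<^sup>2 * ruu + 2 * cosh a * sinh a * rub + (sinh a)\<^sup>2 * rbb = ruu"
  shows "tanh a = - 2 * rub / (ruu + rbb)"
proof -
  have "sinh a \<noteq> 0" "cosh a > 0" using assms(1) by simp_all
  moreover have "sinh a * (sinh a * (ruu + rbb) + 2 * cosh a * rub) = 0"
    using invariant cosh_square_eq[of a] by (simp add: algebra_simps power2_eq_square)
  ultimately have "sinh a * (ruu + rbb) = - 2 * cosh a * rub" "ruu + rbb \<noteq> 0"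
    using assms(2) by auto
  then show ?thesis unfolding tanh_def using \<open>cosh a > 0\<close> by (simp add: field_simps)
qed

theorem mainTheorem8:
  fixes U :: "(real^'n::finite) set"
    and g :: "real^'n \<Rightarrow> 'n \<Rightarrow> 'n \<Rightarrow> real"
    and u w b :: "real^'n \<Rightarrow> 'n \<Rightarrow> real"
    and phi lam v alpha :: "real^'n \<Rightarrow> real"
  assumes dim: "CARD('n) > 3"
    and st: "spacetime U g"
    and u_smooth: "\<forall>k. Cinf_on U (\<lambda>x. u x k)"
    and w_smooth: "\<forall>k. Cinf_on U (\<lambda>x. w x k)"
    and phi_smooth: "Cinf_on U phi"
    and lam_smooth: "Cinf_on U lam"
    and u_unit: "\<forall>x\<in>U. gdot g x (u x) (u x) = -1"
    and w_unit: "\<forall>x\<in>U. gdot g x (w x) (w x) = -1"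
    and u_tf: "\<forall>x\<in>U. \<forall>i j. cov1 g u i j x = phi x * (u x i * u x j + g x i j)"
    and w_tf: "\<forall>x\<in>U. \<forall>i j. cov1 g w i j x = lam x * (w x i * w x j + g x i j)"
    and dphi: "\<forall>x\<in>U. \<forall>k. pd k phi x
                 = - u x k * (\<Sum>m\<in>UNIV. raise g u x m * pd m phi x) + v x * b x k"
    and v_nz: "\<forall>x\<in>U. v x \<noteq> 0"
    and b_unit: "\<forall>x\<in>U. gdot g x (b x) (b x) = 1"
    and ub: "\<forall>x\<in>U. gdot g x (u x) (b x) = 0"
    and w_def: "\<forall>x\<in>U. \<forall>i. w x i = u x i * cosh (alpha x) + b x i * sinh (alpha x)"
    and alpha_nz: "\<forall>x\<in>U. alpha x \<noteq> 0"
  shows "\<forall>x\<in>U. tanh (alpha x) =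
     - 2 * (\<Sum>i\<in>UNIV. \<Sum>j\<in>UNIV. ricci g i j x * raise g u x i * raise g b x j)
       / (\<Sum>i\<in>UNIV. \<Sum>j\<in>UNIV. ricci g i j x *
            (raise g u x i * raise g u x j + raise g b x i * raise g b x j))"
proof
  fix x assume x: "x \<in> U"
  interpret spacetime_chart U g by unfold_locales (rule st)
  have tu: "torse_forming u phi" and tw: "torse_forming w lam"
    using u_smooth phi_smooth u_tf w_smooth lam_smooth w_tf unfolding torse_forming_def by blast+
  let ?U = "raise g u x" and ?B = "raise g b x"
  have boost: "w x = (\<lambda>i. cosh (alpha x) * u x i + sinh (alpha x) * b x i)"
    using w_def x by (auto simp: mult.commute)
  have "(\<lambda>k. pd k phi x) = (\<lambda>k. - u x k * (\<Sum>m\<in>UNIV. raise g u x m * pd m phi x) + v x * b x k)"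
    using dphi x by (intro ext) blast
  then have "ricci_form g x ?U ?B = - (real CARD('n) - 2) * v x"
    using u_unit b_unit ub x by (intro ricci_form_torse_forming_orthogonal[OF tu x]) auto
  then have "ricci_form g x ?U ?B \<noteq> 0" using dim v_nz x by simp
  moreover have "(cosh (alpha x))\<^sup>2 * ricci_form g x ?U ?U + 2 * cosh (alpha x) * sinh (alpha x)
      * ricci_form g x ?U ?B + (sinh (alpha x))\<^sup>2 * ricci_form g x ?B ?B = ricci_form g x ?U ?U"
    using ricci_form_quadratic[OF x] ricci_form_boost_torse_forming[where b = b, OF tu tw x _ _ _ _ boost]
      raise_lincomb[where X = w and Y = u and Z = b, OF boost] u_unit w_unit b_unit ub x by simp
  ultimately have "tanh (alpha x) = - 2 * ricci_form g x ?U ?B / (ricci_form g x ?U ?U + ricci_form g x ?B ?B)"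
    using alpha_nz x by (intro tanh_eq_of_boost_invariant) auto
  then show "tanh (alpha x) = - 2 * (\<Sum>i\<in>UNIV. \<Sum>j\<in>UNIV. ricci g i j x * ?U i * ?B j)
      / (\<Sum>i\<in>UNIV. \<Sum>j\<in>UNIV. ricci g i j x * (?U i * ?U j + ?B i * ?B j))"
    by (simp add: ricci_form_def distrib_left sum.distrib mult.assoc)
qed

end
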